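(* Let $(\mathcal V,\le,\otimes,\mathbb 1)$ be a non-trivial epistemic calculus which is complete. Then $\mathcal V$ cannot simultaneously be closed, strongly epistemically conservative, and cancellative.
   Context: An epistemic calculus is a symmetric monoidal posetal category $(\mathcal V,\le,\otimes,\mathbb 1)$: a partially ordered set $(\mathcal V,\le)$ together with a binary operation $\otimes$ that is associative, commutative, has unit $\mathbb 1$ (i.e. $\mathbb 1\otimes x = x$ for all $x$), and is monotone ($x\le x'$ and $y\le y'$ imply $x\otimes y\le x'\otimes y'$). It is non-trivial if it has at least two distinct elements. It is complete if every subset $S\subseteq\mathcal V$ has a least upper bound (join) $\bigvee S$. It is closed if there is a binary operation $[-,-]$ on $\mathcal V$ (the internal hom) such that for all $x,y,z$: $x\otimes y\le z \iff x\le [y,z]$. It is strongly epistemically conservative if $x\le x\otimes y$ for all $x,y\in\mathcal V$. It is cancellative if for all $x,y,z$, $x\otimes z\le y\otimes z$ implies $x\le y$. *)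

theory Defs
  imports Main
begin

text \<open>An epistemic calculus on the carrier type 'a (the whole type is V):
  a partial order le, a binary operation t (tensor) and a unit e.\<close>

definition epistemic_calculus :: "('a \<Rightarrow> 'a \<Rightarrow> bool) \<Rightarrow> ('a \<Rightarrow> 'a \<Rightarrow> 'a) \<Rightarrow> 'a \<Rightarrow> bool" where
  "epistemic_calculus le t e \<longleftrightarrow>
     (\<forall>x. le x x) \<and>
     (\<forall>x y z. le x y \<longrightarrow> le y z \<longrightarrow> le x z) \<and>
     (\<forall>x y. le x y \<longrightarrow> le y x \<longrightarrow> x = y) \<and>
     (\<forall>x y z. t (t x y) z = t x (t y z)) \<and>
     (\<forall>x y. t x y = t y x) \<and>
     (\<forall>x. t e x = x) \<and>
     (\<forall>x x' y y'. le x x' \<longrightarrow> le y y' \<longrightarrow> le (t x y) (t x' y'))"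

definition nontrivial_calc :: "'a itself \<Rightarrow> bool" where
  "nontrivial_calc _ \<longleftrightarrow> (\<exists>x y :: 'a. x \<noteq> y)"

definition is_join :: "('a \<Rightarrow> 'a \<Rightarrow> bool) \<Rightarrow> 'a set \<Rightarrow> 'a \<Rightarrow> bool" where
  "is_join le S j \<longleftrightarrow> (\<forall>s\<in>S. le s j) \<and> (\<forall>u. (\<forall>s\<in>S. le s u) \<longrightarrow> le j u)"

definition complete_calc :: "('a \<Rightarrow> 'a \<Rightarrow> bool) \<Rightarrow> bool" where
  "complete_calc le \<longleftrightarrow> (\<forall>S. \<exists>j. is_join le S j)"

definition closed_calc :: "('a \<Rightarrow> 'a \<Rightarrow> bool) \<Rightarrow> ('a \<Rightarrow> 'a \<Rightarrow> 'a) \<Rightarrow> bool" where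
  "closed_calc le t \<longleftrightarrow> (\<exists>hom. \<forall>x y z. le (t x y) z \<longleftrightarrow> le x (hom y z))"

definition strongly_epistemically_conservative :: "('a \<Rightarrow> 'a \<Rightarrow> bool) \<Rightarrow> ('a \<Rightarrow> 'a \<Rightarrow> 'a) \<Rightarrow> bool" where
  "strongly_epistemically_conservative le t \<longleftrightarrow> (\<forall>x y. le x (t x y))"

definition cancellative :: "('a \<Rightarrow> 'a \<Rightarrow> bool) \<Rightarrow> ('a \<Rightarrow> 'a \<Rightarrow> 'a) \<Rightarrow> bool" where
  "cancellative le t \<longleftrightarrow> (\<forall>x y z. le (t x z) (t y z) \<longrightarrow> le x y)"

end

theory Submission
  imports Defs
begin

text \<open>A complete calculus has a top element \<open>\<top>\<close>. Strong conservativity makes the unit the least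
  element and makes \<open>\<top>\<close> absorbing, so \<open>x \<otimes> \<top> = \<top> = \<one> \<otimes> \<top>\<close>; cancelling \<open>\<top>\<close> gives
  \<open>x \<le> \<one>\<close>, hence \<open>x = \<one>\<close> for every \<open>x\<close>.\<close>

lemma epistemic_calculusD:
  assumes "epistemic_calculus le t e"
  shows epistemic_calculus_antisym: "le x y \<Longrightarrow> le y x \<Longrightarrow> x = y"
    and epistemic_calculus_commute: "t x y = t y x"
    and epistemic_calculus_unit: "t e x = x"
  using assms unfolding epistemic_calculus_def by blast+

lemma complete_calc_has_greatest:
  assumes "complete_calc le"
  obtains T where "\<And>x. le x T"
proof -
  obtain T where "is_join le UNIV T"
    using assms unfolding complete_calc_def by blast
  then show thesis
    using that unfolding is_join_def by blast
qed

lemma conservative_unit_least: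
  assumes "epistemic_calculus le t e" and "strongly_epistemically_conservative le t"
  shows "le e x"
proof -
  have "le e (t e x)"
    using assms(2) unfolding strongly_epistemically_conservative_def by blast
  then show ?thesis
    by (simp only: epistemic_calculus_unit[OF assms(1)])
qed

lemma conservative_greatest_absorbing:
  assumes calc: "epistemic_calculus le t e"
    and sec: "strongly_epistemically_conservative le t"
    and T: "\<And>y. le y T"
  shows "t x T = T"
proof (rule epistemic_calculus_antisym[OF calc])
  show "le (t x T) T"
    by (rule T)
  have "le T (t T x)"
    using sec unfolding strongly_epistemically_conservative_def by blast
  then show "le T (t x T)"
    by (simp only: epistemic_calculus_commute[OF calc, of T x])
qed

lemma conservative_cancellative_greatest_trivial:
  assumes calc: "epistemic_calculus le t e"
    and sec: "strongly_epistemically_conservative le t"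
    and canc: "cancellative le t"
    and T: "\<And>y. le y T"
  shows "x = e"
proof (rule epistemic_calculus_antisym[OF calc])
  have "le (t x T) (t e T)"
    unfolding conservative_greatest_absorbing[OF calc sec T] by (rule T)
  then show "le x e"
    using canc unfolding cancellative_def by blast
  show "le e x"
    by (rule conservative_unit_least[OF calc sec])
qed

theorem theorem1:
  fixes le :: "'a \<Rightarrow> 'a \<Rightarrow> bool" and t :: "'a \<Rightarrow> 'a \<Rightarrow> 'a" and e :: 'a
  assumes "epistemic_calculus le t e"
    and "nontrivial_calc TYPE('a)"
    and "complete_calc le"
  shows "\<not> (closed_calc le t \<and> strongly_epistemically_conservative le t \<and> cancellative le t)"
proof
  assume "closed_calc le t \<and> strongly_epistemically_conservative le t \<and> cancellative le t"
  then have sec: "strongly_epistemically_conservative le t" and canc: "cancellative le t"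
    by auto
  obtain T where "\<And>x. le x T"
    using complete_calc_has_greatest[OF assms(3)] by blast
  then have "\<And>x :: 'a. x = e"
    using conservative_cancellative_greatest_trivial[OF assms(1) sec canc] by blast
  then have "\<And>x y :: 'a. x = y"
    by metis
  with assms(2) show False
    unfolding nontrivial_calc_def by blast
qed

end
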